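(* Let $A$ be a unique factorization domain and $R$ a subring of $A$ such that the group of units of $R$ equals that of $A$ and $R_0\cap A=R$, where $R_0$ is the field of fractions of $R$ inside that of $A$. If $R$ is square-factorially closed in $A$, then $R$ is root closed in $A$, i.e. for every $x\in A$ and $n\ge1$, $x^n\in R$ implies $x\in R$.
   Context: An element $a$ of a commutative ring $A$ is square-free if it cannot be written as $a=b^2c$ with $b,c\in A$ and $b$ not a unit; $\operatorname{Sqf}A$ denotes the set of square-free elements. A subring $R$ of a UFD $A$ is square-factorially closed in $A$ if for every $x\in A$ and $y\in\operatorname{Sqf}A$, $x^2y\in R\setminus\{0\}$ implies $x,y\in R$. *)

theory Defs
  imports "HOL-Computational_Algebra.Computational_Algebra"
begin

definition subring_set :: "'a::comm_ring_1 set \<Rightarrow> bool" where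
  "subring_set R \<longleftrightarrow> 0 \<in> R \<and> 1 \<in> R \<and>
     (\<forall>x\<in>R. \<forall>y\<in>R. x + y \<in> R \<and> x - y \<in> R \<and> x * y \<in> R)"

definition units_of_subring :: "'a::comm_ring_1 set \<Rightarrow> 'a set" where
  "units_of_subring R = {x \<in> R. \<exists>y\<in>R. x * y = 1}"

text \<open>Elements of A lying in the fraction field R0 of R (inside Frac A):
  x = a / b with a, b in R, b nonzero, i.e. b * x = a.\<close>
definition in_frac_field :: "'a::comm_ring_1 set \<Rightarrow> 'a \<Rightarrow> bool" where
  "in_frac_field R x \<longleftrightarrow> (\<exists>a\<in>R. \<exists>b\<in>R. b \<noteq> 0 \<and> b * x = a)"

definition sq_fact_closed :: "'a::comm_ring_1 set \<Rightarrow> bool" where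
  "sq_fact_closed R \<longleftrightarrow>
     (\<forall>x y. squarefree y \<longrightarrow> x ^ 2 * y \<in> R - {0} \<longrightarrow> x \<in> R \<and> y \<in> R)"

definition root_closed :: "'a::comm_ring_1 set \<Rightarrow> bool" where
  "root_closed R \<longleftrightarrow> (\<forall>x n. n \<ge> 1 \<longrightarrow> x ^ n \<in> R \<longrightarrow> x \<in> R)"

end

theory Submission
  imports Defs
begin

text \<open>Write \<open>x = e d\<^sup>2\<close> with \<open>e\<close> square-free. For odd \<open>n = 2m + 1\<close> we have
  \<open>x\<^sup>n = (d\<^sup>n e\<^sup>m)\<^sup>2 e\<close>, so square-factorial closedness puts \<open>e\<close> and \<open>d\<^sup>n e\<^sup>m\<close> into \<open>R\<close>;
  dividing by \<open>e\<^sup>m\<close> inside the fraction field gives \<open>d\<^sup>n \<in> R\<close>, and \<open>d\<close> has fewer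
  prime factors than \<open>x\<close> unless \<open>x\<close> is a unit, which lies in \<open>R\<close> by the hypothesis on
  units. For even \<open>n = 2m\<close>, applying closedness to \<open>x\<^sup>n = (x\<^sup>m)\<^sup>2 \<cdot> 1\<close> halves the exponent.\<close>

lemma subring_set_power_closed:
  assumes "subring_set R" "x \<in> R"
  shows "x ^ k \<in> R"
  using assms by (induction k) (auto simp: subring_set_def)

lemma size_prime_factorization_square_part_less:
  fixes x :: "'a :: {idom, factorial_semiring}"
  assumes "x \<noteq> 0" "\<not> is_unit x"
  shows "size (prime_factorization (square_part x)) < size (prime_factorization x)"
proof -
  let ?d = "square_part x" and ?e = "squarefree_part x"
  have "?d \<noteq> 0" using assms by simp
  have "prime_factorization x = prime_factorization (?e * ?d ^ 2)"
    using squarefree_decompose[of x] by simp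
  also have "\<dots> = prime_factorization ?e + prime_factorization ?d + prime_factorization ?d"
    using \<open>?d \<noteq> 0\<close> by (simp add: prime_factorization_mult power2_eq_square add.assoc)
  finally have "size (prime_factorization x) =
      size (prime_factorization ?e) + 2 * size (prime_factorization ?d)"
    by simp
  moreover have "prime_factorization x \<noteq> {#}"
    using assms by (simp add: prime_factorization_empty_iff)
  then have "size (prime_factorization x) > 0" by (simp add: nonempty_has_size)
  ultimately show ?thesis by linarith
qed

lemma in_frac_field_cancel:
  assumes "{x. in_frac_field R x} = R" "b \<in> R" "b \<noteq> 0" "b * y \<in> R"
  shows "y \<in> R"
  using assms unfolding in_frac_field_def by blast

lemma sq_fact_closed_square:
  fixes R :: "'a :: {idom, algebraic_semidom} set"
  assumes "sq_fact_closed R" "x ^ 2 \<in> R" "x \<noteq> 0"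
  shows "x \<in> R"
proof -
  from assms(1) have "squarefree (1::'a) \<longrightarrow> x ^ 2 * 1 \<in> R - {0} \<longrightarrow> x \<in> R \<and> 1 \<in> R"
    unfolding sq_fact_closed_def by blast
  then show ?thesis using assms(2,3) by simp
qed

lemma sq_fact_closed_even_power:
  fixes R :: "'a :: {idom, algebraic_semidom} set"
  assumes "subring_set R" "sq_fact_closed R" "x ^ (2 * m) \<in> R"
  shows "x ^ m \<in> R"
proof (cases "x = 0")
  case True
  then show ?thesis using assms(1) by (cases m) (simp_all add: subring_set_def)
next
  case False
  then show ?thesis
    using sq_fact_closed_square[OF assms(2)] assms(3) by (simp add: power_mult[symmetric] mult.commute)
qed

lemma sq_fact_closed_odd_power_decompose:
  fixes R :: "'a :: {idom, factorial_semiring} set"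
  assumes sub: "subring_set R" and frac: "{x. in_frac_field R x} = R"
    and sq: "sq_fact_closed R"
    and "odd n" "x ^ n \<in> R" "x \<noteq> 0"
  shows "squarefree_part x \<in> R" "square_part x ^ n \<in> R"
proof -
  define d where "d = square_part x"
  define e where "e = squarefree_part x"
  obtain m where n: "n = 2 * m + 1" using \<open>odd n\<close> oddE by blast
  have "x = e * d ^ 2" unfolding d_def e_def by (rule squarefree_decompose)
  hence "x ^ n = (d ^ n * e ^ m) ^ 2 * e"
    by (simp add: n power_mult_distrib power_mult[symmetric] power_add algebra_simps)
  moreover have "x ^ n \<noteq> 0" using \<open>x \<noteq> 0\<close> by simp
  ultimately have "(d ^ n * e ^ m) ^ 2 * e \<in> R - {0}" using \<open>x ^ n \<in> R\<close> by simp
  moreover have "squarefree e" unfolding e_def by simp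
  ultimately have "d ^ n * e ^ m \<in> R" and "e \<in> R"
    using sq unfolding sq_fact_closed_def by blast+
  moreover have "e ^ m \<noteq> 0" unfolding e_def by simp
  ultimately have "d ^ n \<in> R"
    using in_frac_field_cancel[OF frac subring_set_power_closed[OF sub \<open>e \<in> R\<close>]]
    by (simp add: mult.commute)
  with \<open>e \<in> R\<close> show "squarefree_part x \<in> R" "square_part x ^ n \<in> R"
    by (simp_all add: d_def e_def)
qed

lemma odd_root_closed:
  fixes R :: "'a :: {idom, factorial_semiring} set"
  assumes sub: "subring_set R"
    and units: "units_of_subring R = {x. is_unit x}"
    and frac: "{x. in_frac_field R x} = R"
    and sq: "sq_fact_closed R"
    and "odd n"
  shows "x ^ n \<in> R \<Longrightarrow> x \<in> R"
proof (induction "size (prime_factorization x)" arbitrary: x rule: less_induct)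
  case less
  consider "x = 0" | "is_unit x" | "x \<noteq> 0" "\<not> is_unit x" by blast
  then show ?case
  proof cases
    case 1
    then show ?thesis using sub by (simp add: subring_set_def)
  next
    case 2
    then show ?thesis using units unfolding units_of_subring_def by blast
  next
    case 3
    note decomp = sq_fact_closed_odd_power_decompose[OF sub frac sq \<open>odd n\<close> less.prems \<open>x \<noteq> 0\<close>]
    have "square_part x \<in> R"
      using less.hyps[OF size_prime_factorization_square_part_less[OF 3] decomp(2)] .
    then have "squarefree_part x * square_part x ^ 2 \<in> R"
      using decomp(1) sub subring_set_power_closed[OF sub] by (simp add: subring_set_def)
    then show ?thesis by (subst squarefree_decompose)
  qed
qed

theorem theorem3p5:
  fixes R :: "'a :: {idom, factorial_semiring} set"
  assumes "subring_set R"
    and "units_of_subring R = {x. is_unit x}"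
    and "{x. in_frac_field R x} = R"
    and "sq_fact_closed R"
  shows "root_closed R"
  unfolding root_closed_def
proof (intro allI impI)
  fix x :: 'a and n :: nat
  assume "n \<ge> 1" "x ^ n \<in> R"
  then show "x \<in> R"
  proof (induction n rule: less_induct)
    case (less n)
    show ?case
    proof (cases "odd n")
      case True
      show ?thesis using odd_root_closed[OF assms True less.prems(2)] .
    next
      case False
      then obtain m where n: "n = 2 * m" "m \<ge> 1" using less.prems(1) by fastforce
      with less.prems(2) have "x ^ m \<in> R" using sq_fact_closed_even_power[OF assms(1,4)] by simp
      then show ?thesis using less.IH[of m] n by simp
    qed
  qed
qed

end
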